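(* Let $w\in\mathfrak{S}_n$ be right-almost-reducible at $i$ and left-almost-reducible at $j$. Then $i\ne j$ and $s_is_j=s_js_i$.
   Context: $\mathfrak{S}_n$ has simple generators $S=\{s_1,\ldots,s_{n-1}\}$, $s_i=(i\ i{+}1)$, length $\ell$. $\supp(x)$ is the set of simple generators in a reduced word of $x$; $D_L(x)=\{s:\ell(sx)<\ell(x)\}$, $D_R(x)=\{s:\ell(xs)<\ell(x)\}$. For $J\subseteq S$, $x=x^Jx_J$ is the parabolic decomposition ($x_J\in W_J=\langle J\rangle$, $x^J$ minimal length in $xW_J$); it is a BP-decomposition if $\supp(x^J)\cap J\subseteq D_L(x_J)$. $w$ is Bruhat irreducible if $\supp(w)=S$ and $w$ is not a product $w'w''$ with $w',w''\ne e$ and disjoint supports. A Bruhat irreducible $w$ is almost reducible at $(J,i)$ if $w=w^Jw_J$ is a BP-decomposition with $\supp(w^J)\cap J=\{s_i\}$ and $s_i\notin D_L(w)\cup D_R(w)$. $w$ is right-almost-reducible at $i$ if it is Bruhat irreducible and almost reducible at $(\{s_i,\ldots,s_{n-1}\},i)$, and left-almost-reducible at $j$ if it is Bruhat irreducible and almost reducible at $(\{s_1,\ldots,s_j\},j)$. *)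

theory Defs
  imports "HOL-Combinatorics.Permutations"
begin

text \<open>The symmetric group S_n is the group of permutations of {1..n}; the product
  x y of two elements is the composition x \<circ> y.  The simple generator s_i is
  represented by its index i, 1 \<le> i \<le> n-1.\<close>

definition sgen :: "nat \<Rightarrow> nat \<Rightarrow> nat" where
  "sgen i = (\<lambda>k. if k = i then Suc i else if k = Suc i then i else k)"

definition word_prod :: "nat list \<Rightarrow> nat \<Rightarrow> nat" where
  "word_prod ws = foldr (\<lambda>i acc. sgen i \<circ> acc) ws id"

definition words :: "nat set \<Rightarrow> nat list set" where
  "words J = {ws. set ws \<subseteq> J}"

definition gens :: "nat \<Rightarrow> nat set" where
  "gens n = {1..<n}"

definition Sym :: "nat \<Rightarrow> (nat \<Rightarrow> nat) set" where
  "Sym n = {w. w permutes {1..n}}"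

definition len :: "nat \<Rightarrow> (nat \<Rightarrow> nat) \<Rightarrow> nat" where
  "len n x = (LEAST k. \<exists>ws \<in> words (gens n). length ws = k \<and> word_prod ws = x)"

definition reduced_word :: "nat \<Rightarrow> nat list \<Rightarrow> (nat \<Rightarrow> nat) \<Rightarrow> bool" where
  "reduced_word n ws x \<longleftrightarrow> ws \<in> words (gens n) \<and> word_prod ws = x \<and> length ws = len n x"

text \<open>Support: the simple generators occurring in a reduced word (independent of the word).\<close>
definition supp :: "nat \<Rightarrow> (nat \<Rightarrow> nat) \<Rightarrow> nat set" where
  "supp n x = {i. \<exists>ws. reduced_word n ws x \<and> i \<in> set ws}"

definition DL :: "nat \<Rightarrow> (nat \<Rightarrow> nat) \<Rightarrow> nat set" where
  "DL n x = {s \<in> gens n. len n (sgen s \<circ> x) < len n x}"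

definition DR :: "nat \<Rightarrow> (nat \<Rightarrow> nat) \<Rightarrow> nat set" where
  "DR n x = {s \<in> gens n. len n (x \<circ> sgen s) < len n x}"

definition parab :: "nat set \<Rightarrow> (nat \<Rightarrow> nat) set" where
  "parab J = word_prod ` words J"

definition parabolic_decomp ::
  "nat \<Rightarrow> nat set \<Rightarrow> (nat \<Rightarrow> nat) \<Rightarrow> (nat \<Rightarrow> nat) \<Rightarrow> (nat \<Rightarrow> nat) \<Rightarrow> bool" where
  "parabolic_decomp n J x u v \<longleftrightarrow>
     x = u \<circ> v \<and> v \<in> parab J \<and>
     (\<forall>v' \<in> parab J. len n u \<le> len n (x \<circ> v'))"

definition BP_decomp ::
  "nat \<Rightarrow> nat set \<Rightarrow> (nat \<Rightarrow> nat) \<Rightarrow> (nat \<Rightarrow> nat) \<Rightarrow> (nat \<Rightarrow> nat) \<Rightarrow> bool" where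
  "BP_decomp n J x u v \<longleftrightarrow>
     parabolic_decomp n J x u v \<and> supp n u \<inter> J \<subseteq> DL n v"

definition bruhat_irreducible :: "nat \<Rightarrow> (nat \<Rightarrow> nat) \<Rightarrow> bool" where
  "bruhat_irreducible n w \<longleftrightarrow>
     supp n w = gens n \<and>
     \<not> (\<exists>w1 w2. w1 \<in> Sym n \<and> w2 \<in> Sym n \<and> w1 \<noteq> id \<and> w2 \<noteq> id \<and>
            w = w1 \<circ> w2 \<and> supp n w1 \<inter> supp n w2 = {})"

definition almost_reducible :: "nat \<Rightarrow> (nat \<Rightarrow> nat) \<Rightarrow> nat set \<Rightarrow> nat \<Rightarrow> bool" where
  "almost_reducible n w J i \<longleftrightarrow>
     bruhat_irreducible n w \<and>
     (\<exists>u v. BP_decomp n J w u v \<and> supp n u \<inter> J = {i}) \<and>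
     i \<notin> DL n w \<union> DR n w"

definition right_almost_reducible :: "nat \<Rightarrow> (nat \<Rightarrow> nat) \<Rightarrow> nat \<Rightarrow> bool" where
  "right_almost_reducible n w i \<longleftrightarrow>
     bruhat_irreducible n w \<and> almost_reducible n w {i..<n} i"

definition left_almost_reducible :: "nat \<Rightarrow> (nat \<Rightarrow> nat) \<Rightarrow> nat \<Rightarrow> bool" where
  "left_almost_reducible n w j \<longleftrightarrow>
     bruhat_irreducible n w \<and> almost_reducible n w {1..j} j"

end

theory Submission
  imports Defs
begin

(*
  In S_n the Coxeter length is the number of inversions, so s_k is a left descent of x iff
  x^-1(k+1) < x^-1(k) and a right descent iff x(k+1) < x(k).

  If w is right-almost-reducible at i, the BP-decomposition w = u v has u in S_{1..i+1} and
  v in S_{i..n}, with u(i) < u(i+1) (u is minimal in u W_J) and s_i a left descent of v.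
  Hence exactly two positions q < p with q >= i carry values <= i+1, and they form an
  inversion of w, while every position < i carries a value <= i+1.  Mirror-symmetrically,
  left-almost-reducibility at j gives two positions q' < p' <= j+1 carrying values >= j, again
  an inversion, while every position > j+1 carries a value >= j.

  Since s_i and s_j are not left descents of w, the values i, i+1 (and j, j+1) occur in
  w in increasing positions.  If |i - j| <= 1, following the positions of the three or four
  consecutive values involved forces one of the two pairs above to be an ascent, or
  contradicts w(i) < w(i+1); so |i - j| >= 2 and s_i, s_j commute.
*)

lemma sgen_eq_transpose: "sgen k = transpose k (Suc k)"
  by (auto simp: sgen_def transpose_def fun_eq_iff)

lemma sgen_permutes: "a \<le> k \<Longrightarrow> k < b \<Longrightarrow> sgen k permutes {a..b}"
  unfolding sgen_eq_transpose by (rule permutes_swap_id) auto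

lemma sgen_comp_permutes: "x permutes {1..n} \<Longrightarrow> k \<in> gens n \<Longrightarrow> sgen k \<circ> x permutes {1..n}"
  by (rule permutes_compose) (auto simp: gens_def intro: sgen_permutes)

lemma comp_sgen_permutes: "x permutes {1..n} \<Longrightarrow> k \<in> gens n \<Longrightarrow> x \<circ> sgen k permutes {1..n}"
  by (rule permutes_compose) (auto simp: gens_def intro: sgen_permutes)

lemma sgen_simps [simp]: "sgen k k = Suc k" "sgen k (Suc k) = k" "sgen k (sgen k x) = x"
  by (auto simp: sgen_def)

lemma sgen_comp_sgen [simp]: "sgen k \<circ> sgen k = id"
  by (auto simp: sgen_def fun_eq_iff)

lemma inv_sgen [simp]: "inv (sgen k) = sgen k"
  by (rule inv_unique_comp) simp_all

lemma bij_sgen: "bij (sgen k)"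
  by (rule o_bij[of "sgen k"]) simp_all

lemma sgen_less_sgen_iff: "{c, d} \<noteq> {k, Suc k} \<Longrightarrow> sgen k c < sgen k d \<longleftrightarrow> c < d"
  by (auto simp: sgen_def)

lemma sgen_commute: "i \<noteq> Suc j \<Longrightarrow> j \<noteq> Suc i \<Longrightarrow> sgen i \<circ> sgen j = sgen j \<circ> sgen i"
  by (auto simp: sgen_def fun_eq_iff)

lemma word_prod_Nil [simp]: "word_prod [] = id"
  by (simp add: word_prod_def)

lemma word_prod_Cons [simp]: "word_prod (k # ws) = sgen k \<circ> word_prod ws"
  by (simp add: word_prod_def)

lemma word_prod_append: "word_prod (xs @ ys) = word_prod xs \<circ> word_prod ys"
  by (induction xs) auto

lemma word_prod_rev_comp [simp]: "word_prod (rev ws) \<circ> word_prod ws = id"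
  by (induction ws) (simp_all add: word_prod_append fun_eq_iff)

lemma word_prod_comp_rev [simp]: "word_prod ws \<circ> word_prod (rev ws) = id"
  using word_prod_rev_comp[of "rev ws"] by simp

lemma inv_word_prod: "inv (word_prod ws) = word_prod (rev ws)"
  by (rule inv_unique_comp) simp_all

lemma word_prod_permutes: "set ws \<subseteq> {a..<b} \<Longrightarrow> word_prod ws permutes {a..b}"
proof (induction ws)
  case (Cons k ws)
  then have "sgen k permutes {a..b}" "word_prod ws permutes {a..b}"
    by (auto intro: sgen_permutes)
  then show ?case by (simp only: word_prod_Cons permutes_compose)
qed simp

lemma word_prod_permutes_gens: "set ws \<subseteq> gens n \<Longrightarrow> word_prod ws permutes {1..n}"
  unfolding gens_def by (rule word_prod_permutes)

definition inversions :: "nat \<Rightarrow> (nat \<Rightarrow> nat) \<Rightarrow> (nat \<times> nat) set" where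
  "inversions n x = {(a, b). a \<in> {1..n} \<and> b \<in> {1..n} \<and> a < b \<and> x b < x a}"

lemma finite_inversions [simp]: "finite (inversions n x)"
  by (rule finite_subset[of _ "{1..n} \<times> {1..n}"]) (auto simp: inversions_def)

lemma inversions_id [simp]: "inversions n id = {}"
  by (auto simp: inversions_def)

lemma inversions_sgen_comp:
  assumes x: "x permutes {1..n}" and k: "k \<in> gens n" and asc: "inv x k < inv x (Suc k)"
  shows "inversions n (sgen k \<circ> x) = insert (inv x k, inv x (Suc k)) (inversions n x)"
    and "(inv x k, inv x (Suc k)) \<notin> inversions n x"
proof -
  define a b where "a = inv x k" and "b = inv x (Suc k)"
  have a_iff: "c = a \<longleftrightarrow> x c = k" and b_iff: "c = b \<longleftrightarrow> x c = Suc k" for c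
    unfolding a_def b_def by (metis permutes_inv_eq[OF x])+
  have xab: "x a = k" "x b = Suc k" using a_iff b_iff by blast+
  then have ab: "a \<in> {1..n}" "b \<in> {1..n}" "a < b"
    using k asc permutes_in_image[OF x, of a] permutes_in_image[OF x, of b]
    by (auto simp: gens_def a_def b_def)
  have "(c, d) \<in> inversions n (sgen k \<circ> x) \<longleftrightarrow> (c, d) \<in> insert (a, b) (inversions n x)" for c d
  proof (cases "{x c, x d} = {k, Suc k}")
    case True
    then have "(c = a \<and> d = b) \<or> (c = b \<and> d = a)"
      unfolding a_iff b_iff by (auto simp: doubleton_eq_iff)
    with ab xab show ?thesis unfolding inversions_def by auto
  next
    case False
    then have "(c, d) \<noteq> (a, b)" by (auto simp: a_iff b_iff)
    moreover have "sgen k (x d) < sgen k (x c) \<longleftrightarrow> x d < x c"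
      using False by (intro sgen_less_sgen_iff) (auto simp: insert_commute)
    ultimately show ?thesis unfolding inversions_def by auto
  qed
  then show "inversions n (sgen k \<circ> x) = insert (a, b) (inversions n x)" by auto
  show "(a, b) \<notin> inversions n x" by (simp add: inversions_def xab)
qed

lemma card_inversions_sgen_comp_ascent:
  assumes "x permutes {1..n}" "k \<in> gens n" "inv x k < inv x (Suc k)"
  shows "card (inversions n (sgen k \<circ> x)) = Suc (card (inversions n x))"
  using inversions_sgen_comp[OF assms] by simp

lemma card_inversions_sgen_comp_descent:
  assumes x: "x permutes {1..n}" and k: "k \<in> gens n" and desc: "inv x (Suc k) < inv x k"
  shows "card (inversions n x) = Suc (card (inversions n (sgen k \<circ> x)))"
proof -
  let ?y = "sgen k \<circ> x"
  have y: "?y permutes {1..n}" using sgen_comp_permutes[OF x k] .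
  have "inv ?y k = inv x (Suc k)" "inv ?y (Suc k) = inv x k"
    by (simp_all add: permutes_inv_eq[OF y] permutes_inverses[OF x])
  then have "card (inversions n (sgen k \<circ> ?y)) = Suc (card (inversions n ?y))"
    using card_inversions_sgen_comp_ascent[OF y k] desc by simp
  then show ?thesis by (simp flip: comp_assoc)
qed

lemma inv_neq_inv_Suc: "x permutes S \<Longrightarrow> inv x k \<noteq> inv x (Suc k)"
  by (metis n_not_Suc_n permutes_inverses(1))

lemma card_inversions_le_length:
  "set ws \<subseteq> gens n \<Longrightarrow> card (inversions n (word_prod ws)) \<le> length ws"
proof (induction ws)
  case (Cons k ws)
  have k: "k \<in> gens n" and ws: "set ws \<subseteq> gens n" using Cons.prems by auto
  have x: "word_prod ws permutes {1..n}" using word_prod_permutes_gens[OF ws] .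
  have "card (inversions n (sgen k \<circ> word_prod ws)) \<le> Suc (card (inversions n (word_prod ws)))"
  proof (cases "inv (word_prod ws) k < inv (word_prod ws) (Suc k)")
    case True
    then show ?thesis using card_inversions_sgen_comp_ascent[OF x k] by simp
  next
    case False
    then have "inv (word_prod ws) (Suc k) < inv (word_prod ws) k"
      using inv_neq_inv_Suc[OF x, of k] by linarith
    then show ?thesis using card_inversions_sgen_comp_descent[OF x k] by simp
  qed
  with Cons.IH[OF ws] show ?case by (simp only: word_prod_Cons length_Cons)
qed simp

lemma permutes_inv_ascending_eq_id:
  assumes x: "x permutes {1..n}" and asc: "\<forall>k \<in> gens n. inv x k < inv x (Suc k)"
  shows "x = id"
proof -
  have f: "inv x permutes {1..n}" using permutes_inv[OF x] .
  have "a \<le> inv x a" if "a \<in> {1..n}" for a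
    using that
  proof (induction a)
    case (Suc a)
    show ?case
    proof (cases "a = 0")
      case True
      then show ?thesis using permutes_in_image[OF f, of 1] Suc.prems by auto
    next
      case False
      then have "a \<le> inv x a" "inv x a < inv x (Suc a)"
        using Suc asc by (auto simp: gens_def)
      then show ?thesis by simp
    qed
  qed simp
  then have "inv x = id" by (intro permutes_natset_ge[OF f]) auto
  then show ?thesis by (metis permutes_inv_inv[OF x] inv_id)
qed

lemma exists_word_card_inversions:
  "x permutes {1..n} \<Longrightarrow> \<exists>ws. set ws \<subseteq> gens n \<and> word_prod ws = x \<and> length ws = card (inversions n x)"
proof (induction "card (inversions n x)" arbitrary: x rule: less_induct)
  case less
  show ?case
  proof (cases "x = id")
    case True
    then show ?thesis by (intro exI[of _ "[]"]) simp
  next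
    case False
    then obtain k where k: "k \<in> gens n" and "\<not> inv x k < inv x (Suc k)"
      using permutes_inv_ascending_eq_id[OF less.prems] by blast
    with inv_neq_inv_Suc[OF less.prems, of k] have desc: "inv x (Suc k) < inv x k" by linarith
    let ?y = "sgen k \<circ> x"
    have y: "?y permutes {1..n}" using sgen_comp_permutes[OF less.prems k] .
    have card: "card (inversions n x) = Suc (card (inversions n ?y))"
      by (rule card_inversions_sgen_comp_descent[OF less.prems k desc])
    then have "card (inversions n ?y) < card (inversions n x)" by simp
    then obtain ws where ws: "set ws \<subseteq> gens n" "word_prod ws = ?y" "length ws = card (inversions n ?y)"
      using less.hyps[OF _ y] by blast
    have "word_prod (k # ws) = (sgen k \<circ> sgen k) \<circ> x" by (simp only: word_prod_Cons ws(2) comp_assoc)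
    then have "word_prod (k # ws) = x" by simp
    with k ws(1,3) card show ?thesis by (intro exI[of _ "k # ws"]) simp
  qed
qed

lemma len_le_length:
  assumes "set ws \<subseteq> gens n" "word_prod ws = x"
  shows "len n x \<le> length ws"
  unfolding len_def by (rule Least_le) (use assms in \<open>auto simp: words_def\<close>)

lemma len_eq_card_inversions:
  assumes "x permutes {1..n}"
  shows "len n x = card (inversions n x)"
  unfolding len_def
proof (rule Least_equality)
  show "\<exists>ws\<in>words (gens n). length ws = card (inversions n x) \<and> word_prod ws = x"
    using exists_word_card_inversions[OF assms] by (auto simp: words_def)
next
  fix k assume "\<exists>ws\<in>words (gens n). length ws = k \<and> word_prod ws = x"
  then show "card (inversions n x) \<le> k"
    using card_inversions_le_length by (auto simp: words_def)
qed

lemma len_inv_le: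
  assumes x: "x permutes {1..n}"
  shows "len n (inv x) \<le> len n x"
proof -
  obtain ws where ws: "set ws \<subseteq> gens n" "word_prod ws = x" "length ws = len n x"
    using exists_word_card_inversions[OF x] len_eq_card_inversions[OF x] by auto
  have "word_prod (rev ws) = inv x" using inv_word_prod[of ws] ws(2) by simp
  then have "len n (inv x) \<le> length (rev ws)" using ws(1) by (intro len_le_length) auto
  with ws(3) show ?thesis by simp
qed

lemma len_inv:
  assumes x: "x permutes {1..n}"
  shows "len n (inv x) = len n x"
proof -
  have "len n x \<le> len n (inv x)"
    using len_inv_le[OF permutes_inv[OF x]] by (simp only: permutes_inv_inv[OF x])
  with len_inv_le[OF x] show ?thesis by linarith
qed

lemma DL_iff:
  assumes x: "x permutes {1..n}" and k: "k \<in> gens n"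
  shows "k \<in> DL n x \<longleftrightarrow> inv x (Suc k) < inv x k"
proof -
  have DL: "k \<in> DL n x \<longleftrightarrow> card (inversions n (sgen k \<circ> x)) < card (inversions n x)"
    using k by (simp add: DL_def len_eq_card_inversions[OF x]
        len_eq_card_inversions[OF sgen_comp_permutes[OF x k]])
  show ?thesis
  proof (cases "inv x k < inv x (Suc k)")
    case True
    with DL card_inversions_sgen_comp_ascent[OF x k True] show ?thesis by simp
  next
    case False
    then have desc: "inv x (Suc k) < inv x k" using inv_neq_inv_Suc[OF x, of k] by linarith
    with DL card_inversions_sgen_comp_descent[OF x k desc] show ?thesis by simp
  qed
qed

lemma DR_eq_DL_inv:
  assumes x: "x permutes {1..n}"
  shows "DR n x = DL n (inv x)"
proof -
  have "len n (x \<circ> sgen k) = len n (sgen k \<circ> inv x)" if "k \<in> gens n" for k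
  proof -
    have "len n (x \<circ> sgen k) = len n (inv (x \<circ> sgen k))"
      by (rule len_inv[symmetric, OF comp_sgen_permutes[OF x that]])
    also have "inv (x \<circ> sgen k) = sgen k \<circ> inv x"
      by (simp add: o_inv_distrib permutes_bij[OF x] bij_sgen)
    finally show ?thesis .
  qed
  then show ?thesis by (auto simp: DR_def DL_def len_inv[OF x])
qed

lemma not_in_DL_iff:
  assumes "x permutes {1..n}" "k \<in> gens n"
  shows "k \<notin> DL n x \<longleftrightarrow> inv x k < inv x (Suc k)"
  using DL_iff[OF assms] inv_neq_inv_Suc[OF assms(1), of k] by linarith

lemma not_in_DR_iff:
  "x permutes {1..n} \<Longrightarrow> k \<in> gens n \<Longrightarrow> k \<notin> DR n x \<longleftrightarrow> x k < x (Suc k)"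
  using not_in_DL_iff[of "inv x" n k] by (simp add: DR_eq_DL_inv permutes_inv permutes_inv_inv)

lemma almost_reducible_factor:
  assumes "almost_reducible n w J i"
  obtains us vs where "w = word_prod us \<circ> word_prod vs"
    and "set us \<subseteq> gens n - (J - {i})" and "set vs \<subseteq> J" and "i \<in> gens n"
    and "i \<notin> DR n (word_prod us)" and "i \<in> DL n (word_prod vs)"
proof -
  from assms obtain u v where BP: "BP_decomp n J w u v" and supp: "supp n u \<inter> J = {i}"
    unfolding almost_reducible_def by blast
  then have w: "w = u \<circ> v" and v: "v \<in> parab J" and "i \<in> DL n v"
    and min: "\<forall>v' \<in> parab J. len n u \<le> len n (w \<circ> v')"
    unfolding BP_decomp_def parabolic_decomp_def by auto
  obtain vs where vs: "set vs \<subseteq> J" "v = word_prod vs"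
    using v unfolding parab_def words_def by auto
  have "i \<in> supp n u" "i \<in> J" using supp by auto
  then obtain us where us: "reduced_word n us u" "i \<in> set us"
    unfolding supp_def by blast
  then have "set us \<subseteq> supp n u" unfolding supp_def by blast
  with us supp have us_gens: "set us \<subseteq> gens n - (J - {i})"
    unfolding reduced_word_def words_def by blast
  have coset: "word_prod (rev vs @ [i]) \<in> parab J"
    using vs \<open>i \<in> J\<close> unfolding parab_def words_def by auto
  have "w \<circ> word_prod (rev vs @ [i]) = u \<circ> (word_prod vs \<circ> word_prod (rev vs)) \<circ> sgen i"
    by (simp only: w vs word_prod_append word_prod_Cons word_prod_Nil comp_id comp_assoc)
  also have "\<dots> = u \<circ> sgen i" by (simp only: word_prod_comp_rev comp_id)
  finally have "len n u \<le> len n (u \<circ> sgen i)" using min coset by force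
  then have "i \<notin> DR n u" unfolding DR_def by simp
  have u: "u = word_prod us" and "i \<in> gens n" using us us_gens by (auto simp: reduced_word_def)
  show thesis
    by (rule that[of us vs])
      (use w u vs us_gens \<open>i \<in> gens n\<close> \<open>i \<notin> DR n u\<close> \<open>i \<in> DL n v\<close> in simp_all)
qed

lemma permutes_atLeastAtMost_le: "u permutes {a..b} \<Longrightarrow> k \<le> b \<Longrightarrow> u k \<le> b"
  using permutes_in_image[of u "{a..b}" k] permutes_not_in[of u "{a..b}" k] by fastforce

lemma permutes_atLeastAtMost_ge: "u permutes {a..b} \<Longrightarrow> a \<le> k \<Longrightarrow> a \<le> u k"
  using permutes_in_image[of u "{a..b}" k] permutes_not_in[of u "{a..b}" k] by fastforce

lemma right_almost_reducible_factor:
  assumes "right_almost_reducible n w i"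
  obtains u v where "w = u \<circ> v" and "u permutes {1..Suc i}" and "v permutes {i..n}"
    and "u i < u (Suc i)" and "inv v (Suc i) < inv v i" and "i \<in> gens n"
proof -
  obtain us vs where w: "w = word_prod us \<circ> word_prod vs"
    and us: "set us \<subseteq> gens n - ({i..<n} - {i})" and vs: "set vs \<subseteq> {i..<n}"
    and i: "i \<in> gens n" and "i \<notin> DR n (word_prod us)" "i \<in> DL n (word_prod vs)"
    using assms unfolding right_almost_reducible_def by (blast elim: almost_reducible_factor)
  have "set us \<subseteq> gens n" "set vs \<subseteq> gens n" using us vs i by (auto simp: gens_def)
  then have u: "word_prod us permutes {1..n}" and v: "word_prod vs permutes {1..n}"
    by (blast intro: word_prod_permutes_gens)+
  show thesis
  proof (rule that[OF w _ _ _ _ i])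
    show "word_prod us permutes {1..Suc i}" "word_prod vs permutes {i..n}"
      using us vs i by (auto simp: gens_def intro!: word_prod_permutes)
    show "word_prod us i < word_prod us (Suc i)"
      using not_in_DR_iff[OF u i] \<open>i \<notin> DR n (word_prod us)\<close> by simp
    show "inv (word_prod vs) (Suc i) < inv (word_prod vs) i"
      using DL_iff[OF v i] \<open>i \<in> DL n (word_prod vs)\<close> by simp
  qed
qed

lemma left_almost_reducible_factor:
  assumes "left_almost_reducible n w j"
  obtains u v where "w = u \<circ> v" and "u permutes {j..n}" and "v permutes {1..Suc j}"
    and "u j < u (Suc j)" and "inv v (Suc j) < inv v j" and "j \<in> gens n"
proof -
  obtain us vs where w: "w = word_prod us \<circ> word_prod vs"
    and us: "set us \<subseteq> gens n - ({1..j} - {j})" and vs: "set vs \<subseteq> {1..j}"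
    and j: "j \<in> gens n" and "j \<notin> DR n (word_prod us)" "j \<in> DL n (word_prod vs)"
    using assms unfolding left_almost_reducible_def by (blast elim: almost_reducible_factor)
  have "set us \<subseteq> gens n" "set vs \<subseteq> gens n" using us vs j by (auto simp: gens_def)
  then have u: "word_prod us permutes {1..n}" and v: "word_prod vs permutes {1..n}"
    by (blast intro: word_prod_permutes_gens)+
  show thesis
  proof (rule that[OF w _ _ _ _ j])
    show "word_prod us permutes {j..n}" "word_prod vs permutes {1..Suc j}"
      using us vs j by (auto simp: gens_def intro!: word_prod_permutes)
    show "word_prod us j < word_prod us (Suc j)"
      using not_in_DR_iff[OF u j] \<open>j \<notin> DR n (word_prod us)\<close> by simp
    show "inv (word_prod vs) (Suc j) < inv (word_prod vs) j"
      using DL_iff[OF v j] \<open>j \<in> DL n (word_prod vs)\<close> by simp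
  qed
qed

definition right_pattern :: "(nat \<Rightarrow> nat) \<Rightarrow> nat \<Rightarrow> nat \<Rightarrow> nat \<Rightarrow> bool" where
  "right_pattern w i p q \<longleftrightarrow>
     q < p \<and> w p < w q \<and> {k. i \<le> k \<and> w k \<le> Suc i} = {p, q} \<and> (\<forall>k<i. w k \<le> Suc i)"

definition left_pattern :: "(nat \<Rightarrow> nat) \<Rightarrow> nat \<Rightarrow> nat \<Rightarrow> nat \<Rightarrow> bool" where
  "left_pattern w j p q \<longleftrightarrow>
     q < p \<and> w p < w q \<and> {k. k \<le> Suc j \<and> j \<le> w k} = {p, q} \<and> (\<forall>k>Suc j. j \<le> w k)"

lemma right_pattern_of_factor:
  assumes w: "w = u \<circ> v" and u: "u permutes {1..Suc i}" and v: "v permutes {i..n}"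
    and "u i < u (Suc i)" and "inv v (Suc i) < inv v i"
  shows "right_pattern w i (inv v i) (inv v (Suc i))"
proof -
  have "{k. i \<le> k \<and> w k \<le> Suc i} = {inv v i, inv v (Suc i)}"
  proof (intro set_eqI iffI)
    fix k assume k: "k \<in> {k. i \<le> k \<and> w k \<le> Suc i}"
    have "v k \<le> Suc i"
    proof (rule ccontr)
      assume "\<not> v k \<le> Suc i"
      then have "w k = v k" using w by (simp add: permutes_not_in[OF u])
      with k \<open>\<not> v k \<le> Suc i\<close> show False by simp
    qed
    moreover have "i \<le> v k" using k permutes_atLeastAtMost_ge[OF v] by simp
    ultimately have "v k = i \<or> v k = Suc i" by linarith
    then show "k \<in> {inv v i, inv v (Suc i)}" using permutes_inverses(2)[OF v, of k] by auto
  next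
    fix k assume "k \<in> {inv v i, inv v (Suc i)}"
    then show "k \<in> {k. i \<le> k \<and> w k \<le> Suc i}"
      using w permutes_atLeastAtMost_ge[OF permutes_inv[OF v]]
        permutes_atLeastAtMost_le[OF u] by (auto simp: permutes_inverses[OF v])
  qed
  moreover have "w k \<le> Suc i" if "k < i" for k
    using that w permutes_atLeastAtMost_le[OF u] by (simp add: permutes_not_in[OF v])
  ultimately show ?thesis
    using assms by (simp add: right_pattern_def permutes_inverses[OF v])
qed

lemma left_pattern_of_factor:
  assumes w: "w = u \<circ> v" and u: "u permutes {j..n}" and v: "v permutes {1..Suc j}"
    and "u j < u (Suc j)" and "inv v (Suc j) < inv v j"
  shows "left_pattern w j (inv v j) (inv v (Suc j))"
proof -
  have "{k. k \<le> Suc j \<and> j \<le> w k} = {inv v j, inv v (Suc j)}"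
  proof (intro set_eqI iffI)
    fix k assume k: "k \<in> {k. k \<le> Suc j \<and> j \<le> w k}"
    have "j \<le> v k"
    proof (rule ccontr)
      assume "\<not> j \<le> v k"
      then have "w k = v k" using w by (simp add: permutes_not_in[OF u])
      with k \<open>\<not> j \<le> v k\<close> show False by simp
    qed
    moreover have "v k \<le> Suc j" using k permutes_atLeastAtMost_le[OF v] by simp
    ultimately have "v k = j \<or> v k = Suc j" by linarith
    then show "k \<in> {inv v j, inv v (Suc j)}" using permutes_inverses(2)[OF v, of k] by auto
  next
    fix k assume "k \<in> {inv v j, inv v (Suc j)}"
    then show "k \<in> {k. k \<le> Suc j \<and> j \<le> w k}"
      using w permutes_atLeastAtMost_le[OF permutes_inv[OF v]]
        permutes_atLeastAtMost_ge[OF u] by (auto simp: permutes_inverses[OF v])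
  qed
  moreover have "j \<le> w k" if "Suc j < k" for k
    using that w permutes_atLeastAtMost_ge[OF u] by (simp add: permutes_not_in[OF v])
  ultimately show ?thesis
    using assms by (simp add: left_pattern_def permutes_inverses[OF v])
qed

lemma right_pattern_no_ascent:
  assumes "right_pattern w i p q" and "i \<le> x" "x < y" "w x < w y" "w y \<le> Suc i"
  shows False
proof -
  have S: "{k. i \<le> k \<and> w k \<le> Suc i} = {p, q}" and "q < p" "w p < w q"
    using assms(1) unfolding right_pattern_def by blast+
  have "x \<in> {p, q}" "y \<in> {p, q}" unfolding S [symmetric] using assms(2-5) by auto
  with \<open>q < p\<close> \<open>w p < w q\<close> \<open>x < y\<close> \<open>w x < w y\<close> show False by auto
qed

lemma left_pattern_no_ascent:
  assumes "left_pattern w j p q" and "x < y" "y \<le> Suc j" "j \<le> w x" "w x < w y"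
  shows False
proof -
  have S: "{k. k \<le> Suc j \<and> j \<le> w k} = {p, q}" and "q < p" "w p < w q"
    using assms(1) unfolding left_pattern_def by blast+
  have "x \<in> {p, q}" "y \<in> {p, q}" unfolding S [symmetric] using assms(2-5) by auto
  with \<open>q < p\<close> \<open>w p < w q\<close> \<open>x < y\<close> \<open>w x < w y\<close> show False by auto
qed

locale right_left_patterns =
  fixes w :: "nat \<Rightarrow> nat" and i j p q p' q' :: nat
  assumes bij: "bij w"
    and right: "right_pattern w i p q"
    and left: "left_pattern w j p' q'"
    and inv_ascent_i: "inv w i < inv w (Suc i)"
    and inv_ascent_j: "inv w j < inv w (Suc j)"
    and ascent_i: "w i < w (Suc i)"
begin

lemma w_inv [simp]: "w (inv w m) = m"
  using bij by (simp add: bij_is_surj surj_f_inv_f)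

lemma w_eq_iff [simp]: "w x = w y \<longleftrightarrow> x = y"
  using bij by (simp add: bij_is_inj inj_eq)

lemma right_facts: "q < p" "w p < w q" "i \<le> q" "w q \<le> Suc i"
  and right_below: "k < i \<Longrightarrow> w k \<le> Suc i"
  and right_positions: "i \<le> k \<Longrightarrow> w k \<le> Suc i \<Longrightarrow> k = p \<or> k = q"
  using right unfolding right_pattern_def by (blast | simp add: set_eq_iff)+

lemma left_facts: "q' < p'" "w p' < w q'" "p' \<le> Suc j" "j \<le> w p'"
  and left_above: "Suc j < k \<Longrightarrow> j \<le> w k"
  and left_positions: "k \<le> Suc j \<Longrightarrow> j \<le> w k \<Longrightarrow> k = p' \<or> k = q'"
  using left unfolding left_pattern_def by (blast | simp add: set_eq_iff)+

lemma right_position_of_Suc_i: "i \<le> k \<Longrightarrow> w k = Suc i \<Longrightarrow> k = q"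
  using right_positions[of k] right_facts(2,4) by fastforce

lemma left_position_of_j: "k \<le> Suc j \<Longrightarrow> w k = j \<Longrightarrow> k = p'"
  using left_positions[of k] left_facts(2,4) by fastforce

lemma i_neq_j: "i \<noteq> j"
proof
  assume [simp]: "i = j"
  define a b where "a = inv w i" and "b = inv w (Suc i)"
  have ab: "a < b" "w a = i" "w b = Suc i" using inv_ascent_i by (simp_all add: a_def b_def)
  have "a < i" using right_pattern_no_ascent[OF right _ ab(1)] ab by force
  have "Suc i < b" using left_pattern_no_ascent[OF left ab(1)] ab by force
  then have "b = q" using right_position_of_Suc_i ab by simp
  then have "Suc i < p" using \<open>Suc i < b\<close> right_facts(1) by simp
  then have "i \<le> w p" using left_above by simp
  moreover have "w p < Suc i" using right_facts(2) ab \<open>b = q\<close> by simp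
  ultimately have "w p = w a" using ab(2) by linarith
  then have "p = a" by simp
  with \<open>a < i\<close> \<open>Suc i < p\<close> show False by simp
qed

lemma i_neq_Suc_j: "i \<noteq> Suc j"
proof
  assume i: "i = Suc j"
  define x y z where "x = inv w j" and "y = inv w (Suc j)" and "z = inv w (Suc i)"
  have "x < y" "y < z" using inv_ascent_i inv_ascent_j by (simp_all add: x_def y_def z_def i)
  show False
  proof (cases "i \<le> y")
    case True
    with right_pattern_no_ascent[OF right _ \<open>y < z\<close>] show False by (simp add: y_def z_def i)
  next
    case False
    with left_pattern_no_ascent[OF left \<open>x < y\<close>] show False by (simp add: x_def y_def i)
  qed
qed

lemma j_neq_Suc_i: "j \<noteq> Suc i"
proof
  assume j: "j = Suc i"
  define x y where "x = inv w i" and "y = inv w (Suc i)"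
  have xy: "x < y" "w x = i" "w y = Suc i" using inv_ascent_i by (simp_all add: x_def y_def)
  have "x < i" using right_pattern_no_ascent[OF right _ xy(1)] xy by force
  show False
  proof (cases "i \<le> y")
    case True
    then have "y = q" using right_position_of_Suc_i xy by simp
    have "w p \<noteq> i" using \<open>x < i\<close> \<open>i \<le> y\<close> \<open>y = q\<close> right_facts(1) xy(2) by force
    then have "w p < i" using right_facts(2) xy \<open>y = q\<close> by simp
    then have "p \<le> Suc j" using left_above[of p] j by force
    then have "y = p'" using left_position_of_j \<open>y = q\<close> right_facts(1) xy j by simp
    then have "i \<le> q'"
      using right_below[of q'] left_facts(2) xy by force
    \<comment> \<open>\<open>q' < p' = q < p \<le> i + 2\<close> with \<open>q' \<ge> i\<close>: the inversion \<open>(q', p')\<close> is \<open>(i, i + 1)\<close>\<close>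
    then have "q' = i" "q = Suc i"
      using left_facts(1) \<open>y = p'\<close> \<open>y = q\<close> right_facts(1) \<open>p \<le> Suc j\<close> j by simp_all
    with ascent_i left_facts(2) \<open>y = p'\<close> \<open>y = q\<close> show False by simp
  next
    case False
    then have "y = p'" using left_position_of_j xy j by simp
    then have "w q' \<le> Suc i" using right_below left_facts(1) False by simp
    with left_facts(2) \<open>y = p'\<close> xy show False by simp
  qed
qed

end

theorem corollary5p6:
  fixes n i j :: nat and w :: "nat \<Rightarrow> nat"
  assumes "w \<in> Sym n"
    and "right_almost_reducible n w i"
    and "left_almost_reducible n w j"
  shows "i \<noteq> j \<and> sgen i \<circ> sgen j = sgen j \<circ> sgen i"
proof -
  have w: "w permutes {1..n}" using assms(1) by (simp add: Sym_def)
  obtain u v where uv: "w = u \<circ> v" "u permutes {1..Suc i}" "v permutes {i..n}"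
    "u i < u (Suc i)" "inv v (Suc i) < inv v i" and i: "i \<in> gens n"
    using assms(2) by (rule right_almost_reducible_factor)
  from uv have right: "right_pattern w i (inv v i) (inv v (Suc i))" by (rule right_pattern_of_factor)
  obtain u' v' where uv': "w = u' \<circ> v'" "u' permutes {j..n}" "v' permutes {1..Suc j}"
    "u' j < u' (Suc j)" "inv v' (Suc j) < inv v' j" and j: "j \<in> gens n"
    using assms(3) by (rule left_almost_reducible_factor)
  from uv' have left: "left_pattern w j (inv v' j) (inv v' (Suc j))" by (rule left_pattern_of_factor)
  have "i \<notin> DL n w" "i \<notin> DR n w" "j \<notin> DL n w"
    using assms(2,3) by (auto simp: right_almost_reducible_def left_almost_reducible_def
        almost_reducible_def)
  then interpret right_left_patterns w i j "inv v i" "inv v (Suc i)" "inv v' j" "inv v' (Suc j)"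
    using permutes_bij[OF w] right left not_in_DL_iff[OF w] not_in_DR_iff[OF w] i j
    by unfold_locales auto
  show ?thesis using i_neq_j i_neq_Suc_j j_neq_Suc_i sgen_commute by blast
qed

end
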